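(* Let $G=(V,E,w)$ be an $\mathbb{N}^k$-labeled complete directed graph, let $Q\subseteq E$ be a set of pairwise vertex-disjoint paths, and let $G'=(V',E',w')=\mathrm{contract}_Q(G)$. Then for every Hamiltonian cycle $T'\subseteq E'$ of $G'$, the edge set $T=\mathrm{expand}_Q(T')$ is a Hamiltonian cycle of $G$ with $w(T)=w'(T')+w(Q)$.
   Context: An $\mathbb{N}^k$-labeled complete directed graph is $G=(V,E,w)$ with $V$ finite, $E=\{(u,v)\in V\times V: u\neq v\}$, $w\colon E\to\mathbb{N}^k$; $w$ is extended to edge sets by summation. Paths and cycles are identified with their edge sets; a Hamiltonian cycle visits every vertex exactly once. For an edge $(u,v)\in E$: $\mathrm{contract}_{(u,v)}(G)=(V\setminus\{v\},\{e\in E: v \text{ not incident to } e\},w')$ where $w'(x,y)=w(x,y)$ for $x\ne u$ and $w'(u,z)=w(v,z)$. For a path $P=u_0,e_1,u_1,\dots,e_r,u_r$: $\mathrm{contract}_P(G)=\mathrm{contract}_{e_1}(\mathrm{contract}_{e_2}(\cdots\mathrm{contract}_{e_r}(G)\cdots))$. For a set $Q$ of pairwise vertex-disjoint paths $P_1,\dots,P_r$: $\mathrm{contract}_Q(G)=\mathrm{contract}_{P_1}(\cdots\mathrm{contract}_{P_r}(G)\cdots)$. For an edge set $T$ (Hamiltonian cycle of a contracted graph): $\mathrm{expand}_{(u,v)}(T)=\{(x,y)\in T: x\ne u\}\cup\{(u,v)\}\cup\{(v,x):(u,x)\in T\}$; $\mathrm{expand}_P(T)=\mathrm{expand}_{e_r}(\mathrm{expand}_{e_{r-1}}(\cdots\mathrm{expand}_{e_1}(T)\cdots))$;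 $\mathrm{expand}_Q(T)=\mathrm{expand}_{P_r}(\cdots\mathrm{expand}_{P_1}(T)\cdots)$. Here $w(Q)$ is the total weight of all edges of all paths in $Q$. *)

theory Defs
  imports "HOL-Analysis.Finite_Cartesian_Product"
begin

text \<open>An N^k-labeled complete directed graph is represented by its finite vertex
set V together with a labelling w of ordered pairs; the edge set is determined
by V (all pairs of distinct vertices of V).\<close>

type_synonym ('v, 'k) lgraph = "'v set \<times> ('v \<times> 'v \<Rightarrow> nat ^ 'k)"

definition edges :: "'v set \<Rightarrow> ('v \<times> 'v) set" where
  "edges V = {(u, v). u \<in> V \<and> v \<in> V \<and> u \<noteq> v}"

fun contract_edge :: "'v \<times> 'v \<Rightarrow> ('v, 'k) lgraph \<Rightarrow> ('v, 'k) lgraph" where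
  "contract_edge (u, v) (V, w) =
     (V - {v}, (\<lambda>(x, y). if x = u then w (v, y) else w (x, y)))"

text \<open>A path u0,e1,u1,...,er,ur is given by its vertex list [u0,...,ur];
its edges are e_i = (u_(i-1), u_i).\<close>
definition path_edge_list :: "'v list \<Rightarrow> ('v \<times> 'v) list" where
  "path_edge_list us = zip us (tl us)"

definition path_edges :: "'v list \<Rightarrow> ('v \<times> 'v) set" where
  "path_edges us = set (path_edge_list us)"

definition is_path :: "'v set \<Rightarrow> 'v list \<Rightarrow> bool" where
  "is_path V us \<longleftrightarrow> us \<noteq> [] \<and> distinct us \<and> set us \<subseteq> V"

definition contract_path :: "'v list \<Rightarrow> ('v, 'k) lgraph \<Rightarrow> ('v, 'k) lgraph" where
  "contract_path us G = foldr contract_edge (path_edge_list us) G"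

definition contract_paths :: "'v list list \<Rightarrow> ('v, 'k) lgraph \<Rightarrow> ('v, 'k) lgraph" where
  "contract_paths Qs G = foldr contract_path Qs G"

definition expand_edge :: "'v \<times> 'v \<Rightarrow> ('v \<times> 'v) set \<Rightarrow> ('v \<times> 'v) set" where
  "expand_edge e T = (case e of (u, v) \<Rightarrow>
     {(x, y) \<in> T. x \<noteq> u} \<union> {(u, v)} \<union> {(v, x) | x. (u, x) \<in> T})"

definition expand_path :: "'v list \<Rightarrow> ('v \<times> 'v) set \<Rightarrow> ('v \<times> 'v) set" where
  "expand_path us T = foldl (\<lambda>S e. expand_edge e S) T (path_edge_list us)"

definition expand_paths :: "'v list list \<Rightarrow> ('v \<times> 'v) set \<Rightarrow> ('v \<times> 'v) set" where
  "expand_paths Qs T = foldl (\<lambda>S P. expand_path P S) T Qs"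

text \<open>Hamiltonian cycle (as an edge set) of the complete digraph on V:
a directed cycle through every vertex exactly once (at least 2 vertices,
since there are no loops).\<close>
definition ham_cycle :: "'v set \<Rightarrow> ('v \<times> 'v) set \<Rightarrow> bool" where
  "ham_cycle V T \<longleftrightarrow> (\<exists>vs. distinct vs \<and> set vs = V \<and> length vs \<ge> 2 \<and>
      T = {(vs ! i, vs ! ((i + 1) mod length vs)) | i. i < length vs})"

end

theory Submission
  imports Defs
begin

text \<open>A Hamiltonian cycle of the contracted graph is rotated so that it leaves
the contracted vertex u first; expanding the edge (u, v) then replaces its edge
(u, x) by (u, v), (v, x), which is again a Hamiltonian cycle. The contracted label
of (u, x) is the original label of (v, x), so the total label grows by exactly
w (u, v). Contracting a path changes the labelling only in the rows of its own
vertices, so every path edge is still carrying its original label when its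
contraction is undone; contractions along a path, and along disjoint paths, are
therefore undone one edge at a time in reverse order.\<close>

lemma path_edges_Cons_Cons: "path_edges (u # v # vs) = insert (u, v) (path_edges (v # vs))"
  by (simp add: path_edges_def path_edge_list_def)

lemma path_edges_Cons: "vs \<noteq> [] \<Longrightarrow> path_edges (u # vs) = insert (u, hd vs) (path_edges vs)"
  by (cases vs) (simp_all add: path_edges_Cons_Cons)

lemma path_edges_singleton [simp]: "path_edges [u] = {}"
  by (simp add: path_edges_def path_edge_list_def)

lemma path_edges_append:
  "xs \<noteq> [] \<Longrightarrow> ys \<noteq> [] \<Longrightarrow>
   path_edges (xs @ ys) = path_edges xs \<union> insert (last xs, hd ys) (path_edges ys)"
  by (induction xs rule: induct_list012) (auto simp: path_edges_Cons_Cons neq_Nil_conv)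

lemma fst_in_set_if_in_path_edges: "(x, y) \<in> path_edges vs \<Longrightarrow> x \<in> set vs"
  by (auto simp: path_edges_def path_edge_list_def dest: set_zip_leftD)

definition cycle_edges :: "'v list \<Rightarrow> ('v \<times> 'v) set" where
  "cycle_edges vs = set (zip vs (rotate1 vs))"

lemma cycle_edges_eq_path_edges:
  assumes "vs \<noteq> []"
  shows "cycle_edges vs = path_edges (vs @ [hd vs])"
proof -
  have "length vs - (length vs - 1) = 1"
    using assms by (simp add: Suc_leI)
  then have "zip (vs @ [hd vs]) (tl (vs @ [hd vs])) = zip vs (rotate1 vs)"
    using assms by (simp add: zip_append1 rotate1_hd_tl)
  then show ?thesis
    by (simp add: cycle_edges_def path_edges_def path_edge_list_def)
qed

lemma cycle_edges_Cons:
  assumes "vs \<noteq> []"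
  shows "cycle_edges (u # vs) = insert (u, hd vs) (insert (last vs, u) (path_edges vs))"
  using assms path_edges_append[of "[u]" "vs @ [u]"] path_edges_append[of vs "[u]"]
  by (simp add: cycle_edges_eq_path_edges)

lemma cycle_edges_rotate1 [simp]: "cycle_edges (rotate1 vs) = cycle_edges vs"
proof (cases vs)
  case (Cons u ws)
  show ?thesis
  proof (cases "ws = []")
    case False
    have "cycle_edges (ws @ [u]) = insert (u, hd ws) (path_edges (ws @ [u]))"
      using False path_edges_append[of "ws @ [u]" "[hd ws]"]
      by (simp add: cycle_edges_eq_path_edges)
    moreover have "cycle_edges (u # ws) = insert (u, hd ws) (path_edges (ws @ [u]))"
      using False path_edges_append[of "[u]" "ws @ [u]"]
      by (simp add: cycle_edges_eq_path_edges)
    ultimately show ?thesis using Cons by simp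
  qed (simp add: Cons)
qed simp

lemma cycle_edges_rotate [simp]: "cycle_edges (rotate n vs) = cycle_edges vs"
  by (induction n) simp_all

lemma ham_cycle_iff_cycle_edges:
  "ham_cycle V T \<longleftrightarrow> (\<exists>vs. distinct vs \<and> set vs = V \<and> length vs \<ge> 2 \<and> T = cycle_edges vs)"
proof -
  have "cycle_edges vs = {(vs ! i, vs ! ((i + 1) mod length vs)) | i. i < length vs}" for vs :: "'a list"
    by (auto simp: cycle_edges_def set_zip nth_rotate1)
  then show ?thesis by (simp add: ham_cycle_def)
qed

lemma ham_cycle_from_vertex:
  assumes "ham_cycle V T" "u \<in> V"
  obtains vs where "vs \<noteq> []" "distinct (u # vs)" "set (u # vs) = V" "T = cycle_edges (u # vs)"
proof -
  obtain us where us: "distinct us" "set us = V" "length us \<ge> 2" "T = cycle_edges us"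
    using assms(1) by (auto simp: ham_cycle_iff_cycle_edges)
  obtain as bs where split: "us = as @ u # bs"
    using us(2) assms(2) by (metis split_list)
  have "cycle_edges (u # bs @ as) = cycle_edges us"
    using split cycle_edges_rotate[of "length as" us] by (simp add: rotate_append)
  show thesis
  proof (rule that)
    show "bs @ as \<noteq> []" using us(3) split by auto
  qed (use us split \<open>cycle_edges (u # bs @ as) = cycle_edges us\<close> in auto)
qed

lemma contract_path_Nil [simp]: "contract_path [] G = G"
  by (simp add: contract_path_def path_edge_list_def)

lemma contract_path_singleton [simp]: "contract_path [u] G = G"
  by (simp add: contract_path_def path_edge_list_def)

lemma contract_path_Cons_Cons:
  "contract_path (u # v # vs) G = contract_edge (u, v) (contract_path (v # vs) G)"
  by (simp add: contract_path_def path_edge_list_def)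

lemma expand_path_singleton [simp]: "expand_path [u] T = T"
  by (simp add: expand_path_def path_edge_list_def)

lemma expand_path_Cons_Cons:
  "expand_path (u # v # vs) T = expand_path (v # vs) (expand_edge (u, v) T)"
  by (simp add: expand_path_def path_edge_list_def)

lemma fst_contract_edge [simp]: "fst (contract_edge (u, v) G) = fst G - {v}"
  by (cases G) simp

lemma snd_contract_edge_other_row:
  "x \<noteq> u \<Longrightarrow> snd (contract_edge (u, v) G) (x, y) = snd G (x, y)"
  by (cases G) simp

lemma fst_contract_path: "fst (contract_path P G) = fst G - set (tl P)"
  by (induction P rule: induct_list012) (auto simp: contract_path_Cons_Cons)

lemma snd_contract_path_other_row:
  "x \<notin> set P \<Longrightarrow> snd (contract_path P G) (x, y) = snd G (x, y)"
  by (induction P rule: induct_list012)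
    (simp_all add: contract_path_Cons_Cons snd_contract_edge_other_row)

lemma contract_paths_Nil [simp]: "contract_paths [] G = G"
  by (simp add: contract_paths_def)

lemma contract_paths_Cons: "contract_paths (P # Qs) G = contract_path P (contract_paths Qs G)"
  by (simp add: contract_paths_def)

lemma expand_paths_Nil [simp]: "expand_paths [] T = T"
  by (simp add: expand_paths_def)

lemma expand_paths_Cons: "expand_paths (P # Qs) T = expand_paths Qs (expand_path P T)"
  by (simp add: expand_paths_def)

lemma fst_contract_paths: "fst (contract_paths Qs G) = fst G - (\<Union>P\<in>set Qs. set (tl P))"
  by (induction Qs) (auto simp: contract_paths_Cons fst_contract_path)

lemma snd_contract_paths_other_row:
  "x \<notin> (\<Union>P\<in>set Qs. set P) \<Longrightarrow> snd (contract_paths Qs G) (x, y) = snd G (x, y)"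
  by (induction Qs) (simp_all add: contract_paths_Cons snd_contract_path_other_row)

lemma expand_edge_cycle_edges:
  assumes "vs \<noteq> []" "u \<notin> set vs" "v \<notin> set vs" "u \<noteq> v"
  shows "expand_edge (u, v) (cycle_edges (u # vs)) = cycle_edges (u # v # vs)"
  using assms last_in_set[OF assms(1)]
  by (auto simp: expand_edge_def cycle_edges_Cons path_edges_Cons dest: fst_in_set_if_in_path_edges)

lemma ham_cycle_expand_edge:
  assumes "u \<in> V" "v \<in> V" "u \<noteq> v"
    and "contract_edge (u, v) (V, w) = (V', w')" "ham_cycle V' T'"
  shows "ham_cycle V (expand_edge (u, v) T') \<and> sum w (expand_edge (u, v) T') = sum w' T' + w (u, v)"
proof -
  have V': "V' = V - {v}" and w': "w' = (\<lambda>(x, y). if x = u then w (v, y) else w (x, y))"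
    using assms(4) by auto
  obtain vs where vs: "vs \<noteq> []" "distinct (u # vs)" "set (u # vs) = V'" "T' = cycle_edges (u # vs)"
    using ham_cycle_from_vertex[OF assms(5)] assms(1,3) V' by blast
  have "v \<notin> set vs" using vs(3) V' by auto
  have expand: "expand_edge (u, v) T' = cycle_edges (u # v # vs)"
    using vs \<open>v \<notin> set vs\<close> assms(3) by (simp add: expand_edge_cycle_edges)
  define C where "C = insert (last vs, u) (path_edges vs)"
  have rows_C: "x \<in> set vs" if "(x, y) \<in> C" for x y
    using that vs(1) by (auto simp: C_def dest: fst_in_set_if_in_path_edges)
  have "u \<notin> set vs" using vs(2) by simp
  have T': "T' = insert (u, hd vs) C"
    using vs(1,4) by (simp add: C_def cycle_edges_Cons)
  have T: "expand_edge (u, v) T' = insert (u, v) (insert (v, hd vs) C)"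
    using vs(1) by (auto simp: expand C_def cycle_edges_Cons path_edges_Cons)
  have "sum w' C = sum w C"
    using rows_C \<open>u \<notin> set vs\<close> by (intro sum.cong) (auto simp: w')
  moreover have "(u, hd vs) \<notin> C" "(v, hd vs) \<notin> C" "(u, v) \<notin> C"
    using rows_C \<open>u \<notin> set vs\<close> \<open>v \<notin> set vs\<close> by blast+
  moreover have "finite C" by (simp add: C_def path_edges_def)
  ultimately have "sum w (insert (u, v) (insert (v, hd vs) C)) = sum w' (insert (u, hd vs) C) + w (u, v)"
    using assms(3) by (simp add: w' add_ac)
  then have "sum w (expand_edge (u, v) T') = sum w' T' + w (u, v)"
    unfolding T by (simp only: T')
  moreover have "ham_cycle V (expand_edge (u, v) T')"
    unfolding ham_cycle_iff_cycle_edges expand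
    using vs V' assms(2,3) \<open>v \<notin> set vs\<close> by (intro exI[of _ "u # v # vs"]) auto
  ultimately show ?thesis by blast
qed

lemma ham_cycle_expand_path:
  assumes "is_path V P" "contract_path P (V, w) = (V', w')" "ham_cycle V' T'"
  shows "ham_cycle V (expand_path P T') \<and>
         sum w (expand_path P T') = sum w' T' + sum w (path_edges P)"
  using assms
proof (induction P arbitrary: V' w' T' rule: induct_list012)
  case (3 u v vs)
  obtain V1 w1 where G1: "contract_path (v # vs) (V, w) = (V1, w1)"
    by (metis surj_pair)
  have "u \<notin> set (v # vs)" "set (u # v # vs) \<subseteq> V"
    using "3.prems"(1) by (auto simp: is_path_def)
  then have uv: "u \<in> V1" "v \<in> V1" "u \<noteq> v"
    using "3.prems"(1) fst_contract_path[of "v # vs" "(V, w)"] G1 by (auto simp: is_path_def)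
  have "contract_edge (u, v) (V1, w1) = (V', w')"
    using "3.prems"(2) G1 by (simp add: contract_path_Cons_Cons)
  note edge = ham_cycle_expand_edge[OF uv this "3.prems"(3)]
  have "is_path V (v # vs)"
    using "3.prems"(1) by (auto simp: is_path_def)
  note path = "3.IH"(2)[OF this G1 conjunct1[OF edge]]
  have "w1 (u, v) = w (u, v)"
    using snd_contract_path_other_row[OF \<open>u \<notin> set (v # vs)\<close>, of "(V, w)"] G1 by simp
  moreover have "(u, v) \<notin> path_edges (v # vs)"
    using \<open>u \<notin> set (v # vs)\<close> fst_in_set_if_in_path_edges by metis
  moreover have "finite (path_edges (v # vs))" by (simp add: path_edges_def)
  ultimately show ?case
    using path edge by (simp add: expand_path_Cons_Cons path_edges_Cons_Cons add_ac)
qed (auto simp: is_path_def)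

lemma ham_cycle_expand_paths:
  assumes "\<forall>P\<in>set Qs. is_path V P" "sorted_wrt (\<lambda>P Q. set P \<inter> set Q = {}) Qs"
    and "contract_paths Qs (V, w) = (V', w')" "ham_cycle V' T'"
  shows "ham_cycle V (expand_paths Qs T') \<and>
         sum w (expand_paths Qs T') = sum w' T' + sum w (\<Union>P\<in>set Qs. path_edges P)"
  using assms
proof (induction Qs arbitrary: V' w' T')
  case (Cons P Qs)
  obtain V1 w1 where G1: "contract_paths Qs (V, w) = (V1, w1)"
    by (metis surj_pair)
  have disjoint: "set P \<inter> set Q = {}" if "Q \<in> set Qs" for Q
    using Cons.prems(2) that by simp
  have "set (tl Q) \<subseteq> set Q" for Q :: "'a list"
    by (cases Q) auto
  then have is_path: "is_path V1 P"
    using Cons.prems(1) disjoint fst_contract_paths[of Qs "(V, w)"] G1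
    by (fastforce simp: is_path_def)
  have "contract_path P (V1, w1) = (V', w')"
    using Cons.prems(3) G1 by (simp add: contract_paths_Cons)
  note path = ham_cycle_expand_path[OF is_path this Cons.prems(4)]
  have paths: "ham_cycle V (expand_paths Qs (expand_path P T')) \<and>
      sum w (expand_paths Qs (expand_path P T')) =
      sum w1 (expand_path P T') + sum w (\<Union>Q\<in>set Qs. path_edges Q)"
    using Cons.IH Cons.prems(1,2) G1 conjunct1[OF path] by simp
  have "sum w1 (path_edges P) = sum w (path_edges P)"
    using disjoint fst_in_set_if_in_path_edges snd_contract_paths_other_row[of _ Qs "(V, w)"] G1
    by (intro sum.cong) fastforce+
  moreover have "path_edges P \<inter> (\<Union>Q\<in>set Qs. path_edges Q) = {}"
    using disjoint fst_in_set_if_in_path_edges by fastforce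
  moreover have "finite (path_edges Q)" for Q :: "'a list"
    by (simp add: path_edges_def)
  ultimately show ?case
    using paths path by (simp add: expand_paths_Cons sum.union_disjoint add_ac)
qed simp

theorem proposition12:
  fixes V :: "'v set" and w :: "'v \<times> 'v \<Rightarrow> nat ^ 'k::finite"
    and Qs :: "'v list list" and T' :: "('v \<times> 'v) set"
    and V' :: "'v set" and w' :: "'v \<times> 'v \<Rightarrow> nat ^ 'k"
  assumes "finite V"
    and "\<forall>P \<in> set Qs. is_path V P"
    and "\<forall>i < length Qs. \<forall>j < length Qs. i \<noteq> j \<longrightarrow> set (Qs ! i) \<inter> set (Qs ! j) = {}"
    and "(V', w') = contract_paths Qs (V, w)"
    and "ham_cycle V' T'"
  shows "ham_cycle V (expand_paths Qs T') \<and>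
         sum w (expand_paths Qs T') = sum w' T' + sum w (\<Union>P \<in> set Qs. path_edges P)"
proof -
  have "sorted_wrt (\<lambda>P Q. set P \<inter> set Q = {}) Qs"
    using assms(3) by (auto simp: sorted_wrt_iff_nth_less)
  then show ?thesis
    using ham_cycle_expand_paths[OF assms(2) _ assms(4)[symmetric] assms(5)] by blast
qed

end
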